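(* Let $n\in\mathbb{N}^*$ and let $\mathbb{R}^n$ carry the euclidean distance $d_2$. (1) For every real $t>0$, the set $\mathrm{age}_t((\mathbb{R}^n,d_2))$ of isometry types of finite subspaces $\mathbb X$ of $(\mathbb{R}^n,d_2)$ with $d(\mathbb X)\ge t$ is an ideal which is not representable. (2) For every subset $A\subset\mathbb{R}_+^*$ with $|A|<2^{\aleph_0}$, the set $\mathrm{age}_{-A}((\mathbb{R}^n,d_2))$ of isometry types of finite subspaces $\mathbb X$ of $(\mathbb{R}^n,d_2)$ none of whose non-zero distances belongs to $A$ is an ideal, and there is a subset $Y\subseteq\mathbb{R}^n$ whose age (with the induced euclidean distance) equals $\mathrm{age}_{-A}((\mathbb{R}^n,d_2))$.
   Context: For a metric space $\mathbb X$, $d(\mathbb X)$ is the infimum of its non-zero distances ($+\infty$ if $\mathbb X$ has at most one point). Finite metric spaces are considered up to isometry and ordered by isometric embeddability; the age of a metric space is the set of isometry types of its finite subspaces. An ideal is a non-empty, downward closed, up-directed set of such isometry types; it is representable if it equals the age of some metric space. *)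

theory Defs
  imports "HOL-Analysis.Analysis" "HOL-Library.Equipollence"
begin

definition isometric :: "'a set \<Rightarrow> ('a \<Rightarrow> 'a \<Rightarrow> real) \<Rightarrow> 'b set \<Rightarrow> ('b \<Rightarrow> 'b \<Rightarrow> real) \<Rightarrow> bool" where
  "isometric A dA B dB \<longleftrightarrow>
     (\<exists>f. bij_betw f A B \<and> (\<forall>x\<in>A. \<forall>y\<in>A. dB (f x) (f y) = dA x y))"

text \<open>Canonical representatives of finite metric spaces: finite carriers in nat.\<close>
type_synonym fms = "nat set \<times> (nat \<Rightarrow> nat \<Rightarrow> real)"

definition fin_metric :: "fms \<Rightarrow> bool" where
  "fin_metric X \<longleftrightarrow> finite (fst X) \<and> Metric_space (fst X) (snd X)"

definition iso_type :: "'a set \<Rightarrow> ('a \<Rightarrow> 'a \<Rightarrow> real) \<Rightarrow> fms set" where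
  "iso_type F d = {X. fin_metric X \<and> isometric (fst X) (snd X) F d}"

definition fin_types :: "fms set set" where
  "fin_types = {iso_type (fst X) (snd X) | X. fin_metric X}"

definition embeds :: "fms set \<Rightarrow> fms set \<Rightarrow> bool" where
  "embeds \<tau> \<sigma> \<longleftrightarrow> (\<exists>X\<in>\<tau>. \<exists>Y\<in>\<sigma>. \<exists>Z. Z \<subseteq> fst Y \<and> isometric (fst X) (snd X) Z (snd Y))"

definition ideal_types :: "fms set set \<Rightarrow> bool" where
  "ideal_types I \<longleftrightarrow> I \<subseteq> fin_types \<and> I \<noteq> {}
     \<and> (\<forall>\<sigma>\<in>I. \<forall>\<tau>\<in>fin_types. embeds \<tau> \<sigma> \<longrightarrow> \<tau> \<in> I)
     \<and> (\<forall>\<sigma>\<in>I. \<forall>\<tau>\<in>I. \<exists>\<rho>\<in>I. embeds \<sigma> \<rho> \<and> embeds \<tau> \<rho>)"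

definition age :: "'a set \<Rightarrow> ('a \<Rightarrow> 'a \<Rightarrow> real) \<Rightarrow> fms set set" where
  "age M d = {iso_type F d | F. F \<subseteq> M \<and> finite F}"

text \<open>d(X): infimum of non-zero distances, +\<infinity> if at most one point.\<close>
definition min_dist :: "'a set \<Rightarrow> ('a \<Rightarrow> 'a \<Rightarrow> real) \<Rightarrow> ereal" where
  "min_dist F d = Inf {ereal (d x y) | x y. x \<in> F \<and> y \<in> F \<and> x \<noteq> y}"

definition age_ge :: "real \<Rightarrow> 'a set \<Rightarrow> ('a \<Rightarrow> 'a \<Rightarrow> real) \<Rightarrow> fms set set" where
  "age_ge t M d = {iso_type F d | F. F \<subseteq> M \<and> finite F \<and> min_dist F d \<ge> ereal t}"

definition age_avoid :: "real set \<Rightarrow> 'a set \<Rightarrow> ('a \<Rightarrow> 'a \<Rightarrow> real) \<Rightarrow> fms set set" where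
  "age_avoid A M d = {iso_type F d | F. F \<subseteq> M \<and> finite F \<and>
      (\<forall>x\<in>F. \<forall>y\<in>F. x \<noteq> y \<longrightarrow> d x y \<notin> A)}"

end

theory Submission
  imports Defs
begin

(* Part (1): the ideal age_ge t is directed because two finite t-separated sets can be
   translated far apart.  It is not the age of any metric space M: every finite subset of M
   would be isometric to a t-separated subset of R^n, and t-separated sets in a ball of R^n
   have boundedly many points, so the balls of M are finite and M is countable; yet M must
   realise every distance s >= t.

   Part (2): list the finite A-avoiding sets along a well-order whose proper initial segments
   have fewer than 2^aleph0 elements, and translate each of them along a fixed line.  When F
   is placed, fewer than 2^aleph0 points are already there, and each triple (point of F,
   placed point, forbidden distance) excludes at most two positions on the line, so some
   translate of F keeps all new distances outside A.  The union of the translates avoids A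
   and contains a copy of every finite A-avoiding set. *)

unbundle cardinal_syntax

section \<open>Isometry types and ideals\<close>

lemma isometric_refl: "isometric A d A d"
  unfolding isometric_def by (rule exI[of _ id]) auto

lemma isometric_sym:
  assumes "isometric A dA B dB"
  shows "isometric B dB A dA"
proof -
  obtain f where f: "bij_betw f A B" "\<forall>x\<in>A. \<forall>y\<in>A. dB (f x) (f y) = dA x y"
    using assms unfolding isometric_def by blast
  have "bij_betw (inv_into A f) B A"
    using f(1) by (rule bij_betw_inv_into)
  moreover have "dA (inv_into A f x) (inv_into A f y) = dB x y" if "x \<in> B" "y \<in> B" for x y
  proof -
    have "x \<in> f ` A" "y \<in> f ` A"
      using f(1) that by (auto simp: bij_betw_def)
    then show ?thesis
      using f(2) by (metis f_inv_into_f inv_into_into)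
  qed
  ultimately show ?thesis
    unfolding isometric_def by blast
qed

lemma isometric_trans:
  assumes "isometric A dA B dB" "isometric B dB C dC"
  shows "isometric A dA C dC"
proof -
  obtain f where f: "bij_betw f A B" "\<forall>x\<in>A. \<forall>y\<in>A. dB (f x) (f y) = dA x y"
    using assms(1) unfolding isometric_def by blast
  obtain g where g: "bij_betw g B C" "\<forall>x\<in>B. \<forall>y\<in>B. dC (g x) (g y) = dB x y"
    using assms(2) unfolding isometric_def by blast
  have "bij_betw (g \<circ> f) A C"
    using f(1) g(1) by (rule bij_betw_trans)
  moreover have "\<forall>x\<in>A. \<forall>y\<in>A. dC ((g \<circ> f) x) ((g \<circ> f) y) = dA x y"
    using f g by (auto simp: bij_betw_def)
  ultimately show ?thesis
    unfolding isometric_def by blast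
qed

lemma isometric_subset_image:
  assumes "bij_betw f A B" "\<forall>x\<in>A. \<forall>y\<in>A. dB (f x) (f y) = dA x y" "Z \<subseteq> A"
  shows "isometric Z dA (f ` Z) dB"
  unfolding isometric_def using assms bij_betw_subset by blast

lemma isometric_translation:
  fixes v :: "'a::real_normed_vector"
  shows "isometric G dist ((\<lambda>x. x + v) ` G) dist"
  by (rule isometric_subset_image[of "\<lambda>x. x + v" UNIV UNIV])
    (auto simp: dist_norm bij_betw_def inj_on_def surj_def intro: exI[of _ "_ - v"])

lemma Metric_space_dist: "Metric_space (S::'a::metric_space set) dist"
  using Metric_space.subspace[OF Met_TC.Metric_space_axioms] by blast

lemma ex_fin_metric_isometric:
  assumes "finite F" "Metric_space F d"
  shows "\<exists>X. fin_metric X \<and> isometric (fst X) (snd X) F d"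
proof -
  obtain h where h: "bij_betw h {0..<card F} F"
    using ex_bij_betw_nat_finite[OF assms(1)] by blast
  define X where "X = ({0..<card F}, \<lambda>i j. d (h i) (h j))"
  have "isometric (fst X) (snd X) F d"
    unfolding isometric_def X_def using h by auto
  moreover have "Metric_space (fst X) (snd X)"
  proof
    have hin: "h i \<in> F" if "i \<in> {0..<card F}" for i
      using h that by (auto simp: bij_betw_def)
    fix i j k
    show "0 \<le> snd X i j"
      unfolding X_def using Metric_space.nonneg[OF assms(2)] by simp
    show "snd X i j = snd X j i"
      unfolding X_def using Metric_space.commute[OF assms(2)] by simp
    assume ijk: "i \<in> fst X" "j \<in> fst X" "k \<in> fst X"
    then show "snd X i j = 0 \<longleftrightarrow> i = j"
      unfolding X_def using hin Metric_space.zero[OF assms(2)] h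
      by (auto simp: bij_betw_def inj_on_def)
    show "snd X i k \<le> snd X i j + snd X j k"
      using ijk hin Metric_space.triangle[OF assms(2)] unfolding X_def by simp
  qed
  ultimately show ?thesis
    using assms(1) unfolding fin_metric_def X_def by auto
qed

lemma iso_type_cong:
  assumes "isometric F d G e"
  shows "iso_type F d = iso_type G e"
  unfolding iso_type_def
  using assms isometric_sym isometric_trans[of _ _ F d G e] isometric_trans[of _ _ G e F d] by blast

lemma isometric_if_iso_type_eq:
  assumes "finite F" "Metric_space F d" "iso_type F d = iso_type G e"
  shows "isometric F d G e"
proof -
  obtain X where X: "fin_metric X" "isometric (fst X) (snd X) F d"
    using ex_fin_metric_isometric assms(1,2) by blast
  then have "X \<in> iso_type G e"
    using assms(3) unfolding iso_type_def by blast
  then have "isometric (fst X) (snd X) G e"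
    unfolding iso_type_def by blast
  then show ?thesis
    using X(2) isometric_sym isometric_trans by blast
qed

lemma iso_type_in_fin_types:
  assumes "finite F" "Metric_space F d"
  shows "iso_type F d \<in> fin_types"
proof -
  obtain X where X: "fin_metric X" "isometric (fst X) (snd X) F d"
    using ex_fin_metric_isometric assms by blast
  then have "iso_type F d = iso_type (fst X) (snd X)"
    using iso_type_cong isometric_sym by metis
  then show ?thesis
    unfolding fin_types_def using X(1) by blast
qed

lemma embeds_iso_type_subset:
  assumes "finite F" "Metric_space F d" "G \<subseteq> F"
  shows "embeds (iso_type G d) (iso_type F d)"
proof -
  obtain Y where Y: "fin_metric Y" "isometric (fst Y) (snd Y) F d"
    using ex_fin_metric_isometric assms(1,2) by blast
  obtain f where f: "bij_betw f F (fst Y)" "\<forall>x\<in>F. \<forall>y\<in>F. snd Y (f x) (f y) = d x y"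
    using isometric_sym[OF Y(2)] unfolding isometric_def by blast
  obtain X where X: "fin_metric X" "isometric (fst X) (snd X) G d"
    using ex_fin_metric_isometric finite_subset Metric_space.subspace assms by metis
  have "isometric (fst X) (snd X) (f ` G) (snd Y)"
    using X(2) isometric_subset_image[OF f assms(3)] by (rule isometric_trans)
  moreover have "X \<in> iso_type G d" "Y \<in> iso_type F d"
    using X Y unfolding iso_type_def by blast+
  moreover have "f ` G \<subseteq> fst Y"
    using f(1) assms(3) by (auto simp: bij_betw_def)
  ultimately show ?thesis
    unfolding embeds_def by blast
qed

lemma embeds_iso_typeE:
  assumes "\<tau> \<in> fin_types" "embeds \<tau> (iso_type F d)"
  obtains G where "G \<subseteq> F" "\<tau> = iso_type G d"
proof -
  obtain X Y Z where XYZ: "X \<in> \<tau>" "Y \<in> iso_type F d" "Z \<subseteq> fst Y"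
    "isometric (fst X) (snd X) Z (snd Y)"
    using assms(2) unfolding embeds_def by blast
  have \<tau>: "\<tau> = iso_type (fst X) (snd X)"
  proof -
    obtain X0 where "fin_metric X0" "\<tau> = iso_type (fst X0) (snd X0)"
      using assms(1) unfolding fin_types_def by blast
    then show ?thesis
      using XYZ(1) iso_type_cong unfolding iso_type_def by blast
  qed
  obtain f where f: "bij_betw f (fst Y) F" "\<forall>x\<in>fst Y. \<forall>y\<in>fst Y. d (f x) (f y) = snd Y x y"
    using XYZ(2) unfolding iso_type_def isometric_def by blast
  have "isometric (fst X) (snd X) (f ` Z) d"
    using XYZ(4) isometric_subset_image[OF f XYZ(3)] by (rule isometric_trans)
  moreover have "f ` Z \<subseteq> F"
    using f(1) XYZ(3) by (auto simp: bij_betw_def)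
  ultimately show ?thesis
    using that \<tau> iso_type_cong by metis
qed

lemma ideal_types_iso_types:
  assumes M: "Metric_space M d"
    and empty: "P {}"
    and hereditary: "\<And>F G. F \<subseteq> M \<Longrightarrow> finite F \<Longrightarrow> P F \<Longrightarrow> G \<subseteq> F \<Longrightarrow> P G"
    and directed: "\<And>F G. F \<subseteq> M \<Longrightarrow> finite F \<Longrightarrow> P F \<Longrightarrow> G \<subseteq> M \<Longrightarrow> finite G \<Longrightarrow> P G \<Longrightarrow>
       \<exists>H F' G'. H \<subseteq> M \<and> finite H \<and> P H \<and> F' \<subseteq> H \<and> G' \<subseteq> H \<and>
         isometric F d F' d \<and> isometric G d G' d"
  shows "ideal_types {iso_type F d | F. F \<subseteq> M \<and> finite F \<and> P F}"
proof -
  define I where "I = {iso_type F d | F. F \<subseteq> M \<and> finite F \<and> P F}"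
  have sub: "Metric_space F d" if "F \<subseteq> M" for F
    using Metric_space.subspace[OF M that] .
  have types: "I \<subseteq> fin_types"
    unfolding I_def using iso_type_in_fin_types sub by blast
  have nonempty: "I \<noteq> {}"
    unfolding I_def using empty by blast
  have down: "\<tau> \<in> I" if \<sigma>: "\<sigma> \<in> I" and \<tau>: "\<tau> \<in> fin_types" "embeds \<tau> \<sigma>" for \<sigma> \<tau>
  proof -
    obtain F where F: "\<sigma> = iso_type F d" "F \<subseteq> M" "finite F" "P F"
      using \<sigma> unfolding I_def by blast
    obtain G where "G \<subseteq> F" "\<tau> = iso_type G d"
      using embeds_iso_typeE \<tau> F(1) by blast
    then show ?thesis
      unfolding I_def using F hereditary finite_subset by blast
  qed
  have up: "\<exists>\<rho>\<in>I. embeds \<sigma> \<rho> \<and> embeds \<tau> \<rho>" if \<sigma>: "\<sigma> \<in> I" and \<tau>: "\<tau> \<in> I" for \<sigma> \<tau>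
  proof -
    obtain F where F: "\<sigma> = iso_type F d" "F \<subseteq> M" "finite F" "P F"
      using \<sigma> unfolding I_def by blast
    obtain G where G: "\<tau> = iso_type G d" "G \<subseteq> M" "finite G" "P G"
      using \<tau> unfolding I_def by blast
    obtain H F' G' where H: "H \<subseteq> M" "finite H" "P H" "F' \<subseteq> H" "G' \<subseteq> H"
      "isometric F d F' d" "isometric G d G' d"
      using directed[OF F(2-4) G(2-4)] by blast
    have "embeds \<sigma> (iso_type H d)" "embeds \<tau> (iso_type H d)"
      using F(1) G(1) iso_type_cong[OF H(6)] iso_type_cong[OF H(7)]
        embeds_iso_type_subset[OF H(2) sub[OF H(1)]] H(4,5) by auto
    moreover have "iso_type H d \<in> I"
      unfolding I_def using H(1-3) by blast
    ultimately show ?thesis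
      by blast
  qed
  show ?thesis
    unfolding ideal_types_def I_def[symmetric] using types nonempty down up by blast
qed

lemma ideal_types_age:
  assumes "Metric_space M d"
  shows "ideal_types (age M d)"
proof -
  have "ideal_types {iso_type F d | F. F \<subseteq> M \<and> finite F \<and> True}"
  proof (rule ideal_types_iso_types[OF assms])
    fix F G assume "F \<subseteq> M" "finite F" "G \<subseteq> M" "finite G"
    then show "\<exists>H F' G'. H \<subseteq> M \<and> finite H \<and> True \<and> F' \<subseteq> H \<and> G' \<subseteq> H \<and>
        isometric F d F' d \<and> isometric G d G' d"
      using isometric_refl by (intro exI[of _ "F \<union> G"] exI[of _ F] exI[of _ G]) auto
  qed auto
  then show ?thesis
    unfolding age_def by simp
qed

section \<open>Separated sets in euclidean space\<close>

lemma ereal_le_min_dist_iff: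
  "ereal t \<le> min_dist F d \<longleftrightarrow> (\<forall>x\<in>F. \<forall>y\<in>F. x \<noteq> y \<longrightarrow> t \<le> d x y)"
  unfolding min_dist_def le_Inf_iff by (auto simp flip: ereal_less_eq(3))

lemma isometric_min_dist:
  assumes "isometric F d G e"
  shows "min_dist F d = min_dist G e"
proof -
  obtain f where f: "bij_betw f F G" "\<forall>x\<in>F. \<forall>y\<in>F. e (f x) (f y) = d x y"
    using assms unfolding isometric_def by blast
  have "G = f ` F" "inj_on f F"
    using f(1) by (auto simp: bij_betw_def)
  then have "{ereal (e x y) | x y. x \<in> G \<and> y \<in> G \<and> x \<noteq> y}
      = {ereal (d x y) | x y. x \<in> F \<and> y \<in> F \<and> x \<noteq> y}"
    using f(2) by (auto simp: inj_on_eq_iff) (metis (no_types, lifting) image_eqI inj_on_eq_iff)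
  then show ?thesis
    unfolding min_dist_def by simp
qed

lemma ereal_le_min_dist_Un_iff:
  "ereal t \<le> min_dist (F \<union> G) d \<longleftrightarrow> ereal t \<le> min_dist F d \<and> ereal t \<le> min_dist G d \<and>
     (\<forall>x\<in>F. \<forall>y\<in>G. x \<noteq> y \<longrightarrow> t \<le> d x y \<and> t \<le> d y x)"
  unfolding ereal_le_min_dist_iff by auto

lemma ex_far_translation:
  fixes F G :: "'a::euclidean_space set"
  assumes "finite F" "finite G"
  shows "\<exists>v. \<forall>f\<in>F. \<forall>g\<in>G. t \<le> dist f (g + v)"
proof -
  obtain B where B: "\<And>x. x \<in> F \<union> G \<Longrightarrow> norm x \<le> B"
    using finite_imp_bounded[of "F \<union> G"] assms by (auto simp: bounded_iff)
  obtain v :: 'a where v: "norm v = \<bar>t\<bar> + 2 * \<bar>B\<bar>"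
    using vector_choose_size[of "\<bar>t\<bar> + 2 * \<bar>B\<bar>"] by auto
  have "t \<le> dist f (g + v)" if "f \<in> F" "g \<in> G" for f g
  proof -
    have "norm v \<le> dist f (g + v) + norm f + norm g"
      using norm_triangle_ineq4[of "f - g" "f - (g + v)"] norm_triangle_ineq4[of f g]
      by (simp add: dist_norm algebra_simps)
    moreover have "norm f \<le> B" "norm g \<le> B"
      using B that by auto
    ultimately show ?thesis
      using v abs_ge_self[of t] abs_ge_self[of B] by linarith
  qed
  then show ?thesis
    by blast
qed

lemma ideal_types_age_ge:
  "ideal_types (age_ge t (UNIV::'a::euclidean_space set) dist)"
proof -
  have "ideal_types {iso_type F dist | F. F \<subseteq> (UNIV::'a set) \<and> finite F \<and> ereal t \<le> min_dist F dist}"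
  proof (rule ideal_types_iso_types[OF Metric_space_dist])
    fix F G :: "'a set"
    assume F: "finite F" "ereal t \<le> min_dist F dist" and G: "finite G" "ereal t \<le> min_dist G dist"
    obtain v where v: "\<forall>f\<in>F. \<forall>g\<in>G. t \<le> dist f (g + v)"
      using ex_far_translation F(1) G(1) by blast
    let ?G' = "(\<lambda>x. x + v) ` G"
    have "ereal t \<le> min_dist ?G' dist"
      using G(2) isometric_min_dist[OF isometric_translation] by metis
    then have H: "ereal t \<le> min_dist (F \<union> ?G') dist"
      unfolding ereal_le_min_dist_Un_iff using F(2) v by (auto simp: dist_commute)
    show "\<exists>(H::'a set) F' G'. H \<subseteq> UNIV \<and> finite H \<and> ereal t \<le> min_dist H dist \<and>
        F' \<subseteq> H \<and> G' \<subseteq> H \<and> isometric F dist F' dist \<and> isometric G dist G' dist"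
      by (rule exI[of _ "F \<union> ?G'"], rule exI[of _ F], rule exI[of _ ?G'])
        (use F(1) G(1) H isometric_refl isometric_translation in auto)
  qed (auto simp: ereal_le_min_dist_iff)
  then show ?thesis
    unfolding age_ge_def .
qed

lemma card_le_if_separated_in_cball:
  fixes t k :: real
  assumes "t > 0"
  shows "\<exists>N. \<forall>(c::'a::euclidean_space) G. G \<subseteq> cball c k \<longrightarrow> ereal t \<le> min_dist G dist \<longrightarrow> card G \<le> N"
proof -
  obtain C where C: "finite C" "cball (0::'a) k \<subseteq> (\<Union>z\<in>C. ball z (t/2))"
  proof (rule compactE_image[OF compact_cball, of "cball 0 k" "\<lambda>x. ball x (t/2)"])
    show "cball 0 k \<subseteq> (\<Union>z\<in>cball 0 k. ball z (t/2))"
      using assms by force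
  qed auto
  have "card G \<le> card C" if G: "G \<subseteq> cball c k" "ereal t \<le> min_dist G dist" for c :: 'a and G
  proof -
    have "\<exists>z\<in>C. g - c \<in> ball z (t/2)" if "g \<in> G" for g
    proof -
      have "g - c \<in> cball 0 k"
        using G(1) that by (auto simp: dist_norm norm_minus_commute)
      then show ?thesis
        using C(2) by blast
    qed
    then obtain \<phi> where \<phi>: "\<And>g. g \<in> G \<Longrightarrow> \<phi> g \<in> C \<and> g - c \<in> ball (\<phi> g) (t/2)"
      by metis
    have "inj_on \<phi> G"
    proof (rule inj_onI, rule ccontr)
      fix x y assume xy: "x \<in> G" "y \<in> G" "\<phi> x = \<phi> y" "x \<noteq> y"
      have "dist (\<phi> y) (x - c) < t/2" "dist (\<phi> y) (y - c) < t/2"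
        using \<phi>[OF xy(1)] \<phi>[OF xy(2)] xy(3) by simp_all
      then have "dist (x - c) (y - c) < t"
        by (rule dist_triangle_half_r)
      moreover have "t \<le> dist (x - c) (y - c)"
        using G(2) xy by (simp add: ereal_le_min_dist_iff dist_norm)
      ultimately show False
        by simp
    qed
    then show ?thesis
      using card_inj_on_le C(1) \<phi> by (metis image_subsetI)
  qed
  then show ?thesis
    by blast
qed

lemma finite_cball_if_isometric_separated:
  fixes M :: "'b set" and t k :: real
  assumes "t > 0" "Metric_space M d" "x0 \<in> M"
    and embed: "\<And>F. F \<subseteq> M \<Longrightarrow> finite F \<Longrightarrow>
      \<exists>G::'a::euclidean_space set. ereal t \<le> min_dist G dist \<and> isometric F d G dist"
  shows "finite {y\<in>M. d x0 y \<le> k}"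
proof (rule ccontr)
  assume "infinite {y\<in>M. d x0 y \<le> k}"
  then obtain y where "y \<in> M" "d x0 y \<le> k"
    by (metis (no_types, lifting) empty_Collect_eq finite.emptyI)
  then have "0 \<le> k"
    using Metric_space.nonneg[OF assms(2)] order_trans by blast
  obtain N where N: "\<And>(c::'a) G. G \<subseteq> cball c k \<Longrightarrow> ereal t \<le> min_dist G dist \<Longrightarrow> card G \<le> N"
    using card_le_if_separated_in_cball[OF assms(1)] by blast
  obtain S where S: "finite S" "card S = Suc N" "S \<subseteq> {y\<in>M. d x0 y \<le> k}"
    using infinite_arbitrarily_large[OF \<open>infinite _\<close>] by blast
  have "finite (insert x0 S)" "insert x0 S \<subseteq> M"
    using S assms(3) by auto
  then obtain G :: "'a set" and f where G: "ereal t \<le> min_dist G dist"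
    and f: "bij_betw f (insert x0 S) G" "\<forall>x\<in>insert x0 S. \<forall>y\<in>insert x0 S. dist (f x) (f y) = d x y"
    using embed unfolding isometric_def by blast
  have "G \<subseteq> cball (f x0) k"
  proof
    fix g assume "g \<in> G"
    then obtain y where y: "y \<in> insert x0 S" "g = f y"
      using f(1) by (auto simp: bij_betw_def)
    moreover have "d x0 y \<le> k"
      using y(1) S(3) Metric_space.zero[OF assms(2,3,3)] \<open>0 \<le> k\<close> by (cases "y = x0") auto
    ultimately show "g \<in> cball (f x0) k"
      using f(2) by auto
  qed
  then have "card G \<le> N"
    using N G by blast
  moreover have "card G = card (insert x0 S)"
    using f(1) by (simp add: bij_betw_same_card)
  ultimately show False
    using card_insert_le[of S x0] S(2) by linarith
qed

lemma countable_if_finite_sublevels: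
  fixes f :: "'a \<Rightarrow> real"
  assumes "\<And>k::nat. finite {y\<in>M. f y \<le> k}"
  shows "countable M"
proof -
  have "M \<subseteq> (\<Union>k::nat. {y\<in>M. f y \<le> k})"
    using real_nat_ceiling_ge by blast
  moreover have "countable (\<Union>k::nat. {y\<in>M. f y \<le> k})"
    using assms by (intro countable_UN) (auto intro: countable_finite)
  ultimately show ?thesis
    by (rule countable_subset)
qed

lemma distance_in_age_ge_realised:
  fixes M :: "'b set" and t s :: real
  assumes "0 < t" "t \<le> s" "age_ge t (UNIV::'a::euclidean_space set) dist \<subseteq> age M d"
  shows "\<exists>x\<in>M. \<exists>y\<in>M. d x y = s"
proof -
  obtain e :: 'a where e: "norm e = s"
    using vector_choose_size[of s] assms(1,2) by auto
  then have "ereal t \<le> min_dist {0, e} dist"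
    using assms(2) by (simp add: ereal_le_min_dist_iff)
  then have "iso_type {0, e} dist \<in> age_ge t (UNIV::'a set) dist"
    unfolding age_ge_def by (intro CollectI exI[of _ "{0, e}"]) simp
  then have "iso_type {0, e} dist \<in> age M d"
    by (rule subsetD[OF assms(3)])
  then obtain F where F: "iso_type {0, e} dist = iso_type F d" "F \<subseteq> M"
    unfolding age_def by blast
  then have "isometric {0, e} dist F d"
    by (intro isometric_if_iso_type_eq[OF _ Metric_space_dist]) simp_all
  then obtain f where "f ` {0, e} \<subseteq> M" "\<forall>x\<in>{0, e}. \<forall>y\<in>{0, e}. d (f x) (f y) = dist x y"
    using F(2) unfolding isometric_def bij_betw_def by blast
  then show ?thesis
    using e by (metis dist_0_norm image_subset_iff insertCI)
qed

lemma age_ne_age_ge: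
  fixes M :: "'b set" and t :: real
  assumes "t > 0" "Metric_space M d"
  shows "age M d \<noteq> age_ge t (UNIV::'a::euclidean_space set) dist"
proof
  assume eq: "age M d = age_ge t (UNIV::'a set) dist"
  have "\<exists>G::'a set. ereal t \<le> min_dist G dist \<and> isometric F d G dist"
    if "F \<subseteq> M" "finite F" for F
  proof -
    have "iso_type F d \<in> age_ge t (UNIV::'a set) dist"
      using that unfolding eq[symmetric] age_def by blast
    then obtain G :: "'a set" where "iso_type F d = iso_type G dist" "ereal t \<le> min_dist G dist"
      unfolding age_ge_def by blast
    then show ?thesis
      using isometric_if_iso_type_eq that Metric_space.subspace[OF assms(2)] by blast
  qed
  note finite_cball = finite_cball_if_isometric_separated[OF assms _ this]
  have realised: "\<exists>x\<in>M. \<exists>y\<in>M. d x y = s" if "t \<le> s" for s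
    using distance_in_age_ge_realised[OF assms(1) that] eq by blast
  then obtain x0 where "x0 \<in> M"
    by blast
  then have "countable M"
    using finite_cball by (intro countable_if_finite_sublevels[of M "d x0"]) blast
  then have "countable ((\<lambda>(x, y). d x y) ` (M \<times> M))"
    by blast
  moreover have "{t..t+1} \<subseteq> (\<lambda>(x, y). d x y) ` (M \<times> M)"
    using realised by fastforce
  ultimately have "countable {t..t+1}"
    by (rule countable_subset[rotated])
  then show False
    using uncountable_closed_interval[of t "t+1"] by simp
qed

section \<open>Cardinalities below the continuum\<close>

lemma lepoll_iff_card_of_ordLeq: "A \<lesssim> B \<longleftrightarrow> |A| \<le>o |B|"
  unfolding lepoll_def using card_of_ordLeq by blast

lemma lesspoll_iff_card_of_ordLess: "A \<prec> B \<longleftrightarrow> |A| <o |B|"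
  unfolding lesspoll_def lepoll_iff_card_of_ordLeq eqpoll_iff_card_of_ordIso
  using ordLeq_iff_ordLess_or_ordIso not_ordLess_ordIso by blast

lemma times_lesspoll_infinite:
  assumes "infinite U" "X \<prec> U" "Z \<prec> U"
  shows "X \<times> Z \<prec> U"
proof (cases "finite (X <+> Z)")
  case True
  then have "finite (X \<times> Z)"
    by (simp add: finite_Plus_iff)
  then show ?thesis
    by (rule finite_lesspoll_infinite[OF assms(1)])
next
  case False
  have "X \<times> Z \<lesssim> (X <+> Z) \<times> (X <+> Z)"
    by (intro times_lepoll_mono) (auto simp: lepoll_def inj_on_def intro!: exI[of _ Inl] exI[of _ Inr])
  also have "\<dots> \<approx> X <+> Z"
    using card_of_Times_same_infinite[OF False] by (simp add: eqpoll_iff_card_of_ordIso)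
  also have "X <+> Z \<prec> U"
    using assms card_of_Plus_ordLess_infinite by (simp add: lesspoll_iff_card_of_ordLess)
  finally show ?thesis .
qed

lemma UN_lesspoll_infinite:
  assumes "infinite U" "I \<prec> U" "C \<prec> U" "\<And>i. i \<in> I \<Longrightarrow> B i \<lesssim> C"
  shows "(\<Union>i\<in>I. B i) \<prec> U"
proof -
  obtain g where "\<And>i. i \<in> I \<Longrightarrow> B i \<subseteq> g i ` C"
    using assms(4) unfolding lepoll_iff by metis
  then have "(\<Union>i\<in>I. B i) \<subseteq> (\<lambda>(i, c). g i c) ` (I \<times> C)"
    by fastforce
  then have "(\<Union>i\<in>I. B i) \<lesssim> I \<times> C"
    by (rule subset_image_lepoll)
  also have "I \<times> C \<prec> U"
    using assms(1-3) by (rule times_lesspoll_infinite)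
  finally show ?thesis .
qed

lemma nat_lesspoll_real: "(UNIV::nat set) \<prec> (UNIV::real set)"
proof -
  have "\<not> (UNIV::nat set) \<approx> (UNIV::real set)"
    using countable_eqpoll[OF countableI_type eqpoll_sym] uncountable_UNIV_real by blast
  then show ?thesis
    unfolding lesspoll_def using infinite_le_lepoll infinite_UNIV_char_0 by blast
qed

lemma UN_finite_lesspoll_real:
  assumes "I \<prec> (UNIV::real set)" "\<And>i. i \<in> I \<Longrightarrow> finite (B i)"
  shows "(\<Union>i\<in>I. B i) \<prec> (UNIV::real set)"
proof (rule UN_lesspoll_infinite[OF infinite_UNIV_char_0 assms(1) nat_lesspoll_real])
  fix i assume "i \<in> I"
  then show "B i \<lesssim> (UNIV::nat set)"
    using assms(2) countable_finite unfolding countable_def lepoll_def by blast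
qed

lemma lists_lepoll_infinite:
  assumes "infinite A"
  shows "lists A \<lesssim> A"
proof -
  have square: "A \<times> A \<lesssim> A"
    using card_of_Times_same_infinite[OF assms] by (simp add: lepoll_iff_card_of_ordLeq ordIso_iff_ordLeq)
  have length_n: "{xs\<in>lists A. length xs = n} \<lesssim> A" for n
  proof (induction n)
    case 0
    show ?case
      using assms by (auto simp: lepoll_def inj_on_def intro: finite_subset)
  next
    case (Suc n)
    have "{xs\<in>lists A. length xs = Suc n} \<subseteq> (\<lambda>(a, xs). a # xs) ` (A \<times> {xs\<in>lists A. length xs = n})"
      by (auto simp: length_Suc_conv)
    then have "{xs\<in>lists A. length xs = Suc n} \<lesssim> A \<times> {xs\<in>lists A. length xs = n}"
      by (rule subset_image_lepoll)
    also have "\<dots> \<lesssim> A \<times> A"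
      using Suc.IH by (intro times_lepoll_mono) auto
    finally show ?case
      using square by (rule lepoll_trans)
  qed
  have "|\<Union>n::nat. {xs\<in>lists A. length xs = n}| \<le>o |A|"
  proof (rule card_of_UNION_ordLeq_infinite[OF assms])
    show "|UNIV::nat set| \<le>o |A|"
      using assms infinite_le_lepoll lepoll_iff_card_of_ordLeq by blast
    show "\<forall>n\<in>UNIV. |{xs\<in>lists A. length xs = n}| \<le>o |A|"
      using length_n lepoll_iff_card_of_ordLeq by blast
  qed
  moreover have "lists A = (\<Union>n::nat. {xs\<in>lists A. length xs = n})"
    by auto
  ultimately show ?thesis
    by (simp add: lepoll_iff_card_of_ordLeq)
qed

lemma euclidean_lepoll_lists_real: "(UNIV::'a::euclidean_space set) \<lesssim> lists (UNIV::real set)"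
proof -
  obtain L where L: "set L = (Basis::'a set)"
    using finite_list[OF finite_Basis] by blast
  have "inj (\<lambda>x::'a. map (inner x) L)"
    by (rule injI) (simp add: euclidean_eq_iff[where 'a='a] L[symmetric] map_eq_conv)
  then show ?thesis
    unfolding lepoll_def by blast
qed

lemma finite_subsets_lepoll_real: "{F::'a::euclidean_space set. finite F} \<lesssim> (UNIV::real set)"
proof -
  have "{F::'a set. finite F} = set ` lists UNIV"
    using finite_list by auto
  also have "\<dots> \<lesssim> lists (UNIV::'a set)"
    by (rule image_lepoll)
  also have "\<dots> \<lesssim> lists (lists (UNIV::real set))"
    by (intro lists_lepoll_mono euclidean_lepoll_lists_real)
  also have "\<dots> \<lesssim> lists (UNIV::real set)"
    by (intro lists_lepoll_mono lists_lepoll_infinite infinite_UNIV_char_0)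
  also have "\<dots> \<lesssim> (UNIV::real set)"
    by (intro lists_lepoll_infinite infinite_UNIV_char_0)
  finally show ?thesis .
qed

section \<open>Sets avoiding a set of distances\<close>

lemma finite_line_sphere_intersection:
  fixes e w :: "'a::real_inner" and a :: real
  assumes "norm e = 1"
  shows "finite {l. norm (l *\<^sub>R e + w) = a}"
proof -
  define c where "c = a\<^sup>2 - (norm w)\<^sup>2 + (e \<bullet> w)\<^sup>2"
  have "l \<in> {- (e \<bullet> w) + sqrt c, - (e \<bullet> w) - sqrt c}" if "norm (l *\<^sub>R e + w) = a" for l
  proof -
    have "a\<^sup>2 = (l *\<^sub>R e + w) \<bullet> (l *\<^sub>R e + w)"
      using that power2_norm_eq_inner[of "l *\<^sub>R e + w"] by simp
    also have "\<dots> = l\<^sup>2 * (e \<bullet> e) + 2 * l * (e \<bullet> w) + w \<bullet> w"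
      by (simp add: inner_add_left inner_add_right inner_commute power2_eq_square algebra_simps)
    finally have "a\<^sup>2 = l\<^sup>2 * (e \<bullet> e) + 2 * l * (e \<bullet> w) + w \<bullet> w" .
    then have "(l + e \<bullet> w)\<^sup>2 = c"
      using assms unfolding c_def by (simp add: power2_norm_eq_inner[symmetric] power2_eq_square algebra_simps)
    then have "\<bar>l + e \<bullet> w\<bar> = sqrt c"
      by (metis real_sqrt_abs)
    then show ?thesis
      by auto
  qed
  then have "{l. norm (l *\<^sub>R e + w) = a} \<subseteq> {- (e \<bullet> w) + sqrt c, - (e \<bullet> w) - sqrt c}"
    by blast
  then show ?thesis
    by (rule finite_subset) simp
qed

lemma ex_translation_avoiding_distances:
  fixes F Z :: "'a::euclidean_space set"
  assumes "finite F" "Z \<prec> (UNIV::real set)" "A \<prec> (UNIV::real set)"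
  shows "\<exists>v. \<forall>f\<in>F. \<forall>z\<in>Z. dist (f + v) z \<notin> A"
proof -
  obtain e :: 'a where e: "norm e = 1"
    using vector_choose_size[of 1] by auto
  define bad where "bad = (\<Union>(f, z, a)\<in>F \<times> Z \<times> A. {l. norm (l *\<^sub>R e + (f - z)) = a})"
  have "F \<times> Z \<times> A \<prec> (UNIV::real set)"
    using infinite_UNIV_char_0 finite_lesspoll_infinite[OF infinite_UNIV_char_0 assms(1)] assms(2,3)
    by (intro times_lesspoll_infinite)
  then have "bad \<prec> (UNIV::real set)"
    unfolding bad_def
    by (rule UN_finite_lesspoll_real) (auto intro: finite_line_sphere_intersection[OF e])
  then obtain l where "l \<notin> bad"
    by (metis UNIV_eq_I lesspoll_not_refl)
  then have "dist (f + l *\<^sub>R e) z \<notin> A" if "f \<in> F" "z \<in> Z" for f z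
    using that unfolding bad_def by (auto simp: dist_norm algebra_simps)
  then show ?thesis
    by blast
qed

definition avoids_distances :: "real set \<Rightarrow> 'a::metric_space set \<Rightarrow> bool" where
  "avoids_distances A Y \<longleftrightarrow> (\<forall>x\<in>Y. \<forall>y\<in>Y. x \<noteq> y \<longrightarrow> dist x y \<notin> A)"

lemma ex_avoiding_set_containing_translates:
  fixes S :: "'a::euclidean_space set set"
  assumes A: "A \<prec> (UNIV::real set)" and S: "S \<lesssim> (UNIV::real set)"
    and S_finite: "\<And>F. F \<in> S \<Longrightarrow> finite F"
    and S_avoids: "\<And>F. F \<in> S \<Longrightarrow> avoids_distances A F"
  shows "\<exists>Y. avoids_distances A Y \<and> (\<forall>F\<in>S. \<exists>v. (\<lambda>x. x + v) ` F \<subseteq> Y)"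
proof -
  \<comment> \<open>|S| is an initial ordinal, so each proper initial segment of S is smaller than S.\<close>
  define R where "R = |S| - Id"
  have wf: "wf R" and total: "total_on S |S|"
    using card_of_well_order_on[of S]
    unfolding R_def well_order_on_def linear_order_on_def by auto
  define placed where "placed v F = (\<Union>G\<in>underS |S| F. (\<lambda>g. g + v G) ` G)"
    for v :: "'a set \<Rightarrow> 'a" and F
  define step where "step v F = (SOME w. \<forall>f\<in>F. \<forall>z\<in>placed v F. dist (f + w) z \<notin> A)"
    for v F
  define v where "v = wfrec R step"
  have v_step: "v F = step v F" for F
  proof -
    have "v F = step (cut v R F) F"
      unfolding v_def by (rule wfrec[OF wf])
    also have "placed (cut v R F) F = placed v F"
      unfolding placed_def R_def underS_def by (auto simp: cut_apply)
    then have "step (cut v R F) F = step v F"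
      unfolding step_def by simp
    finally show ?thesis .
  qed
  have placed_small: "placed v F \<prec> (UNIV::real set)" if "F \<in> S" for F
  proof -
    have "|underS |S| F| <o |S|"
      using card_of_underS[OF card_of_Card_order] that by (simp add: Field_card_of)
    then have "underS |S| F \<prec> (UNIV::real set)"
      using S by (simp add: lesspoll_iff_card_of_ordLess lepoll_iff_card_of_ordLeq ordLess_ordLeq_trans)
    moreover have "underS |S| F \<subseteq> S"
      by (metis Field_card_of Order_Relation.underS_Field)
    ultimately show ?thesis
      unfolding placed_def using S_finite by (intro UN_finite_lesspoll_real) auto
  qed
  have v_good: "\<forall>f\<in>F. \<forall>z\<in>placed v F. dist (f + v F) z \<notin> A" if "F \<in> S" for F
    using someI_ex[OF ex_translation_avoiding_distances[OF S_finite[OF that] placed_small[OF that] A]]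
    unfolding v_step[of F] step_def .
  define Y where "Y = (\<Union>F\<in>S. (\<lambda>f. f + v F) ` F)"
  have "dist x y \<notin> A" if xy: "x \<in> Y" "y \<in> Y" "x \<noteq> y" for x y
  proof -
    obtain F f G g where F: "F \<in> S" "f \<in> F" "x = f + v F" and G: "G \<in> S" "g \<in> G" "y = g + v G"
      using xy(1,2) unfolding Y_def by blast
    consider "F = G" | "F \<in> underS |S| G" | "G \<in> underS |S| F"
      using total F(1) G(1) unfolding total_on_def underS_def by blast
    then show ?thesis
    proof cases
      case 1
      then show ?thesis
        using S_avoids[OF G(1)] F G xy(3) by (auto simp: avoids_distances_def dist_norm)
    next
      case 2
      then have "x \<in> placed v G"
        unfolding placed_def using F by blast
      then show ?thesis
        using v_good[OF G(1)] G by (simp add: dist_commute)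
    next
      case 3
      then have "y \<in> placed v F"
        unfolding placed_def using G by blast
      then show ?thesis
        using v_good[OF F(1)] F by simp
    qed
  qed
  then show ?thesis
    unfolding avoids_distances_def Y_def by blast
qed

lemma ex_age_eq_age_avoid:
  assumes "A \<prec> (UNIV::real set)"
  shows "\<exists>Y::'a::euclidean_space set. age Y dist = age_avoid A (UNIV::'a set) dist"
proof -
  define S where "S = {F::'a set. finite F \<and> avoids_distances A F}"
  have "S \<lesssim> {F::'a set. finite F}"
    unfolding S_def by (intro subset_imp_lepoll) blast
  then have S_small: "S \<lesssim> (UNIV::real set)"
    using finite_subsets_lepoll_real by (rule lepoll_trans)
  have S_finite: "finite F" and S_avoids: "avoids_distances A F" if "F \<in> S" for F
    using that unfolding S_def by auto
  obtain Y where Y: "avoids_distances A Y" "\<forall>F\<in>S. \<exists>v. (\<lambda>x. x + v) ` F \<subseteq> Y"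
    using ex_avoiding_set_containing_translates[OF assms S_small S_finite S_avoids] by blast
  have "\<sigma> \<in> age_avoid A (UNIV::'a set) dist" if \<sigma>: "\<sigma> \<in> age Y dist" for \<sigma>
  proof -
    obtain F where F: "\<sigma> = iso_type F dist" "F \<subseteq> Y" "finite F"
      using \<sigma> unfolding age_def by blast
    then have "avoids_distances A F"
      using Y(1) unfolding avoids_distances_def by blast
    then show ?thesis
      using F(2,3) unfolding F(1) age_avoid_def avoids_distances_def by blast
  qed
  moreover have "\<sigma> \<in> age Y dist" if \<sigma>: "\<sigma> \<in> age_avoid A (UNIV::'a set) dist" for \<sigma>
  proof -
    obtain F :: "'a set" where F: "\<sigma> = iso_type F dist" "F \<in> S"
      using \<sigma> unfolding age_avoid_def S_def avoids_distances_def by auto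
    then obtain v where "(\<lambda>x. x + v) ` F \<subseteq> Y"
      using Y(2) by blast
    moreover have "\<sigma> = iso_type ((\<lambda>x. x + v) ` F) dist"
      using F(1) iso_type_cong[OF isometric_translation] by simp
    ultimately show ?thesis
      using F(2) unfolding age_def S_def by blast
  qed
  ultimately show ?thesis
    by blast
qed

theorem corollary3:
  fixes n_dummy :: "real ^ 'n"
  shows "(\<forall>t::real. t > 0 \<longrightarrow>
            ideal_types (age_ge t (UNIV :: (real ^ 'n) set) dist) \<and>
            \<not> (\<exists>(M :: 'b set) (d :: 'b \<Rightarrow> 'b \<Rightarrow> real).
                  Metric_space M d \<and> age M d = age_ge t (UNIV :: (real ^ 'n) set) dist))
       \<and> (\<forall>A :: real set. A \<subseteq> {0<..} \<and> A \<prec> (UNIV :: real set) \<longrightarrow>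
            ideal_types (age_avoid A (UNIV :: (real ^ 'n) set) dist) \<and>
            (\<exists>Y :: (real ^ 'n) set. age Y dist = age_avoid A (UNIV :: (real ^ 'n) set) dist))"
proof (intro conjI allI impI)
  fix t :: real
  assume "t > 0"
  show "ideal_types (age_ge t (UNIV :: (real ^ 'n) set) dist)"
    by (rule ideal_types_age_ge)
  show "\<not> (\<exists>(M :: 'b set) d. Metric_space M d \<and> age M d = age_ge t (UNIV :: (real ^ 'n) set) dist)"
    using age_ne_age_ge[OF \<open>t > 0\<close>] by blast
next
  fix A :: "real set"
  assume "A \<subseteq> {0<..} \<and> A \<prec> (UNIV :: real set)"
  then obtain Y :: "(real ^ 'n) set" where Y: "age Y dist = age_avoid A (UNIV :: (real ^ 'n) set) dist"
    using ex_age_eq_age_avoid by blast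
  show "ideal_types (age_avoid A (UNIV :: (real ^ 'n) set) dist)"
    unfolding Y[symmetric] by (rule ideal_types_age[OF Metric_space_dist])
  show "\<exists>Y :: (real ^ 'n) set. age Y dist = age_avoid A (UNIV :: (real ^ 'n) set) dist"
    using Y by blast
qed

end
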